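(* Under the standing setup below, assume $h\in(0,d_{min})$. If $g$ is a continuous bounded function on $\mathcal L(t)$ such that $Q_hg=g$, where $Q_hg(x)=\int_{\mathcal L(t)}q_h(x,y)g(y)\,\mu^t(dy)$, then $g$ is constant on each connected component $\mathcal C_1,\dots,\mathcal C_\ell$ of $\mathcal L(t)$.
   Context: Standing setup. Let $X_1$ be a random vector in $\mathbb R^d$ with law $\mu$ having a Lebesgue density $f$. For $s\in\mathbb R$ let $\mathcal L(s)=\{x\in\mathbb R^d: f(x)\ge s\}$. A level $t>0$ in the interior of the range of $f$ is fixed; $\mathcal L(t)$ is nonempty and compact, with finitely many connected components $\mathcal C_1,\dots,\mathcal C_\ell$, and $d_{min}=\min_{i\neq j}\mathrm{dist}(\mathcal C_i,\mathcal C_j)$. Assumption 1: (i) $f$ is of class $C^2$ on $\mathbb R^d$; (ii) $\|D_xf\|>0$ on $\{x: f(x)=t\}$; (iii) $f$, $D_xf$, $D_x^2f$ are uniformly bounded on $\mathbb R^d$. $B$ denotes the unit ball of $\mathbb R^d$ centered at $0$. Assumption 2: $k:\mathbb R^d\to\mathbb R_+$ satisfies (i) $k$ is $C^2$; (ii) the support of $k$ is $B$; (iii) $k$ is bounded from below on $B/2$ by a positive number; (iv) $k(-x)=k(x)$. For $h>0$, $k_h(u)=k(u/h)$. $\mu^t$ is the conditional law of $X_1$ given $X_1\in\mathcal L(t)$; $K_h(x)=\int_{\mathcal L(t)}k_h(y-x)\,\mu^t(dy)$; $q_h(x,y)=k_h(y-x)/K_h(x)$. *)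

theory Defs
  imports "HOL-Probability.Probability"
begin

definition level_set :: "('a \<Rightarrow> real) \<Rightarrow> real \<Rightarrow> 'a set" where
  "level_set f s = {x. f x \<ge> s}"

definition law_of_density :: "('a::euclidean_space \<Rightarrow> real) \<Rightarrow> 'a measure" where
  "law_of_density f = density lborel (\<lambda>x. ennreal (f x))"

text \<open>mu^t: conditional law of X_1 given X_1 in L(t).\<close>
definition mu_t :: "('a::euclidean_space \<Rightarrow> real) \<Rightarrow> real \<Rightarrow> 'a measure" where
  "mu_t f t = uniform_measure (law_of_density f) (level_set f t)"

definition k_h :: "('a::real_normed_vector \<Rightarrow> real) \<Rightarrow> real \<Rightarrow> 'a \<Rightarrow> real" where
  "k_h k h u = k ((1 / h) *\<^sub>R u)"

definition K_h :: "('a::euclidean_space \<Rightarrow> real) \<Rightarrow> real \<Rightarrow> ('a \<Rightarrow> real) \<Rightarrow> real \<Rightarrow> 'a \<Rightarrow> real" where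
  "K_h f t k h x = (LINT y:level_set f t|mu_t f t. k_h k h (y - x))"

definition q_h :: "('a::euclidean_space \<Rightarrow> real) \<Rightarrow> real \<Rightarrow> ('a \<Rightarrow> real) \<Rightarrow> real \<Rightarrow> 'a \<Rightarrow> 'a \<Rightarrow> real" where
  "q_h f t k h x y = k_h k h (y - x) / K_h f t k h x"

definition Q_h :: "('a::euclidean_space \<Rightarrow> real) \<Rightarrow> real \<Rightarrow> ('a \<Rightarrow> real) \<Rightarrow> real \<Rightarrow> ('a \<Rightarrow> real) \<Rightarrow> 'a \<Rightarrow> real" where
  "Q_h f t k h g x = (LINT y:level_set f t|mu_t f t. q_h f t k h x y * g y)"

definition C2_with :: "('a::euclidean_space \<Rightarrow> real) \<Rightarrow> ('a \<Rightarrow> 'a \<Rightarrow>\<^sub>L real)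
     \<Rightarrow> ('a \<Rightarrow> 'a \<Rightarrow>\<^sub>L 'a \<Rightarrow>\<^sub>L real) \<Rightarrow> bool" where
  "C2_with f Df D2f \<longleftrightarrow>
     (\<forall>x. (f has_derivative blinfun_apply (Df x)) (at x)) \<and>
     (\<forall>x. (Df has_derivative blinfun_apply (D2f x)) (at x)) \<and>
     continuous_on UNIV D2f"

definition C2 :: "('a::euclidean_space \<Rightarrow> real) \<Rightarrow> bool" where
  "C2 f \<longleftrightarrow> (\<exists>Df D2f. C2_with f Df D2f)"

end

theory Submission
  imports Defs
begin

(* Proof idea (a maximum principle for the kernel averaging operator Q_h).
   Fix a component C of L = L(t) and a point x where g attains its maximum M on C.
   Since h < d_min, the kernel k_h(. - x) vanishes on L outside C, so the fixed-point
   equation Q_h g x = g x says that the weighted average of g with weight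
   w = 1_L k_h(. - x) equals M while g <= M wherever w > 0; hence w (M - g) = 0
   almost everywhere for mu^t.  The conditional law mu^t charges every nonempty open
   subset of {f > t}, and {f > t} is dense in L because Df does not vanish on {f = t};
   as w > 0 near x and g is continuous, g = M on L near x.  Thus the maximisers of g
   in C form a nonempty clopen subset of the connected set C, i.e. all of C. *)

section \<open>Regularity and the level set\<close>

lemma C2_with_continuous:
  assumes "C2_with f Df D2f"
  shows "continuous_on UNIV f"
  using assms unfolding C2_with_def
  by (blast intro: continuous_at_imp_continuous_on has_derivative_continuous)

lemma C2_continuous:
  assumes "C2 f"
  shows "continuous_on UNIV f"
  using assms C2_with_continuous unfolding C2_def by blast

text \<open>Where the derivative does not vanish, there are strictly larger values arbitrarily
  close: move a little along a direction on which the derivative is positive.\<close>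
lemma exists_greater_value_nearby:
  fixes f :: "'a::real_normed_vector \<Rightarrow> real"
  assumes der: "(f has_derivative blinfun_apply D) (at y)" and D: "D \<noteq> 0" and e: "e > 0"
  shows "\<exists>z. dist z y < e \<and> f z > f y"
proof -
  obtain v where v: "blinfun_apply D v \<noteq> 0"
    using D by (metis blinfun_eqI zero_blinfun.rep_eq)
  define w where "w = (if blinfun_apply D v > 0 then v else - v)"
  have w: "blinfun_apply D w > 0" using v by (auto simp: w_def blinfun.minus_right)
  have "((\<lambda>s. y + s *\<^sub>R w) has_derivative (\<lambda>s. s *\<^sub>R w)) (at 0)"
    by (auto intro!: derivative_eq_intros)
  then have "((\<lambda>s. f (y + s *\<^sub>R w)) has_derivative (\<lambda>s. blinfun_apply D (s *\<^sub>R w))) (at 0)"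
    using has_derivative_compose[of "\<lambda>s. y + s *\<^sub>R w" _ 0 UNIV f] der by (simp add: o_def)
  then have "((\<lambda>s. f (y + s *\<^sub>R w)) has_real_derivative blinfun_apply D w) (at 0)"
    by (simp add: has_field_derivative_def blinfun.scaleR_right mult.commute[of _ "blinfun_apply D w"])
  then obtain d where d: "d > 0" "\<And>s. s > 0 \<Longrightarrow> s < d \<Longrightarrow> f y < f (y + s *\<^sub>R w)"
    using DERIV_pos_inc_right[OF _ w] by force
  have wn: "norm w > 0" using w by auto
  define s where "s = min (d/2) (e / (2 * norm w))"
  have s: "s > 0" "s < d" using d e wn by (auto simp: s_def)
  have "s * norm w \<le> e / (2 * norm w) * norm w" using wn by (intro mult_right_mono) (auto simp: s_def)
  also have "\<dots> < e" using wn e by (simp add: field_simps)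
  finally have "dist (y + s *\<^sub>R w) y < e" using s by (simp add: dist_norm)
  with d(2)[OF s] show ?thesis by blast
qed

lemma superlevel_dense_in_level_set:
  fixes f :: "'a::real_normed_vector \<Rightarrow> real"
  assumes der: "\<And>x. (f has_derivative blinfun_apply (Df x)) (at x)"
    and nz: "\<And>x. f x = t \<Longrightarrow> Df x \<noteq> 0"
    and y: "y \<in> level_set f t" and e: "e > 0"
  shows "\<exists>z. dist z y < e \<and> t < f z"
proof (cases "f y = t")
  case True
  then show ?thesis using exists_greater_value_nearby[OF der nz[OF True] e] by auto
next
  case False
  then show ?thesis using y e by (intro exI[of _ y]) (auto simp: level_set_def)
qed

section \<open>The conditional law charges open subsets of {f > t}\<close>

lemma interior_range_exceeded:
  fixes f :: "'a \<Rightarrow> real"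
  assumes "t \<in> interior (range f)"
  shows "\<exists>x. t < f x"
proof -
  obtain e where e: "e > 0" "ball t e \<subseteq> range f" using assms by (meson mem_interior)
  moreover have "t + e/2 \<in> ball t e" using e(1) by (simp add: dist_real_def)
  ultimately obtain x where "f x = t + e/2" by auto
  then show ?thesis using e(1) by (intro exI[of _ x]) simp
qed

text \<open>A density bounded below by t > 0 on a nonempty open set gives it positive mass,
  because nonempty open sets have positive Lebesgue measure.\<close>
lemma emeasure_density_open_pos:
  fixes f :: "'a::euclidean_space \<Rightarrow> real"
  assumes [measurable]: "f \<in> borel_measurable borel" and t: "t > 0"
    and V: "open V" "V \<noteq> {}" "V \<subseteq> {x. t < f x}"
  shows "emeasure (law_of_density f) V > 0"
proof -
  have [measurable]: "V \<in> sets borel" using V(1) by auto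
  obtain z r where r: "r > 0" "ball z r \<subseteq> V" using V(1,2) open_contains_ball by blast
  have "0 < measure lborel (ball z r)" using r(1) by (rule content_ball_pos)
  then have "0 < emeasure lborel (ball z r)"
    by (auto simp: measure_def zero_less_iff_neq_zero)
  also have "\<dots> \<le> emeasure lborel V" using r by (intro emeasure_mono) auto
  finally have "0 < ennreal t * emeasure lborel V" using t by (simp add: ennreal_zero_less_mult_iff)
  also have "ennreal t * emeasure lborel V = (\<integral>\<^sup>+ x. ennreal t * indicator V x \<partial>lborel)"
    by (simp add: nn_integral_cmult_indicator)
  also have "\<dots> \<le> (\<integral>\<^sup>+ x. ennreal (f x) * indicator V x \<partial>lborel)"
    using V(3) by (intro nn_integral_mono) (auto simp: indicator_def intro!: ennreal_leI)
  also have "\<dots> = emeasure (law_of_density f) V"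
    unfolding law_of_density_def by (subst emeasure_density) auto
  finally show ?thesis .
qed

lemma sets_mu_t [measurable_cong]: "sets (mu_t f t) = sets borel"
  by (simp add: mu_t_def law_of_density_def)

text \<open>If f exceeds t > 0 somewhere, L(t) has positive finite mass, so conditioning on it
  yields a probability measure which charges every nonempty open subset of {f > t}.\<close>
lemma mu_t_prob_space_and_open_pos:
  fixes f :: "'a::euclidean_space \<Rightarrow> real"
  assumes fc: "continuous_on UNIV f" and prob: "prob_space (law_of_density f)"
    and t: "t > 0" and x: "t < f x"
  shows "prob_space (mu_t f t)"
    and "\<And>V. open V \<Longrightarrow> V \<noteq> {} \<Longrightarrow> V \<subseteq> {x. t < f x} \<Longrightarrow> emeasure (mu_t f t) V > 0"
proof -
  let ?\<mu> = "law_of_density f" and ?L = "level_set f t"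
  have f_meas [measurable]: "f \<in> borel_measurable borel"
    using fc by (rule borel_measurable_continuous_onI)
  have L_sets: "?L \<in> sets ?\<mu>" by (simp add: law_of_density_def level_set_def)
  have open_gt: "open {x. t < f x}" using fc by (simp add: open_Collect_less continuous_on_const)
  have "0 < emeasure ?\<mu> {x. t < f x}"
    using emeasure_density_open_pos[OF f_meas t open_gt] x by auto
  also have "\<dots> \<le> emeasure ?\<mu> ?L"
    unfolding law_of_density_def by (intro emeasure_mono) (auto simp: level_set_def)
  finally have L0: "emeasure ?\<mu> ?L \<noteq> 0" by simp
  have Linf: "emeasure ?\<mu> ?L \<noteq> \<infinity>"
    using prob_space.emeasure_le_1[OF prob, of ?L] by (auto simp: top_unique)
  show "prob_space (mu_t f t)"
    unfolding mu_t_def using prob_space_uniform_measure[OF L0 Linf] .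
  fix V assume V: "open V" "V \<noteq> {}" "V \<subseteq> {x. t < f x}"
  have V_sets: "V \<in> sets ?\<mu>" using V(1) by (simp add: law_of_density_def)
  have "?L \<inter> V = V" using V(3) by (auto simp: level_set_def)
  then have "emeasure (mu_t f t) V = emeasure ?\<mu> V / emeasure ?\<mu> ?L"
    using emeasure_uniform_measure[OF L_sets V_sets] by (simp add: mu_t_def)
  then show "emeasure (mu_t f t) V > 0"
    using emeasure_density_open_pos[OF f_meas t V] Linf by (simp add: zero_less_iff_neq_zero)
qed

section \<open>The averaging argument\<close>

lemma AE_witness_in_open:
  fixes N :: "'a::topological_space measure"
  assumes ae: "AE z in N. P z" and sN: "sets N = sets borel"
    and U: "open U" and pos: "\<And>V. open V \<Longrightarrow> V \<noteq> {} \<Longrightarrow> V \<subseteq> U \<Longrightarrow> emeasure N V > 0"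
    and V: "open V" "V \<inter> U \<noteq> {}"
  shows "\<exists>z\<in>V \<inter> U. P z"
proof (rule ccontr)
  assume "\<not> ?thesis"
  then have "AE z in N. z \<notin> V \<inter> U" using ae by (auto elim!: AE_mp)
  moreover have "V \<inter> U \<in> sets N" using U V(1) sN by auto
  ultimately have "emeasure N (V \<inter> U) = 0"
    using sets_eq_imp_space_eq[OF sN] by (subst (asm) AE_iff_measurable[of "V \<inter> U"]) auto
  then show False using pos[of "V \<inter> U"] U V by auto
qed

lemma weighted_average_at_max:
  fixes w g :: "'a \<Rightarrow> real"
  assumes w: "integrable N w" and wg: "integrable N (\<lambda>z. w z * g z)"
    and w_nonneg: "\<And>z. 0 \<le> w z"
    and avg: "(\<integral>z. w z * g z \<partial>N) = M * (\<integral>z. w z \<partial>N)"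
    and le: "\<And>z. w z \<noteq> 0 \<Longrightarrow> g z \<le> M"
  shows "AE z in N. w z * (M - g z) = 0"
proof -
  have eq: "w z * (M - g z) = M * w z - w z * g z" for z by (simp add: algebra_simps)
  have int: "integrable N (\<lambda>z. w z * (M - g z))" unfolding eq using w wg by auto
  have "(\<integral>z. w z * (M - g z) \<partial>N) = 0" unfolding eq using w wg avg by simp
  moreover have "0 \<le> w z * (M - g z)" for z
    using le[of z] w_nonneg[of z] by (cases "w z = 0") auto
  ultimately show ?thesis using integral_nonneg_eq_0_iff_AE[OF int] by simp
qed

lemma averaging_maximum_spreads:
  fixes N :: "'a::metric_space measure" and w g :: "'a \<Rightarrow> real"
  assumes sN: "sets N = sets borel" and U: "open U" "U \<subseteq> L"
    and pos: "\<And>V. open V \<Longrightarrow> V \<noteq> {} \<Longrightarrow> V \<subseteq> U \<Longrightarrow> emeasure N V > 0"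
    and dense: "\<And>y e. y \<in> L \<Longrightarrow> e > 0 \<Longrightarrow> \<exists>z\<in>U. dist z y < e"
    and w: "integrable N w" "integrable N (\<lambda>z. w z * g z)" "\<And>z. 0 \<le> w z"
    and w_pos: "\<And>z. z \<in> L \<Longrightarrow> dist z x < r \<Longrightarrow> w z > 0"
    and avg: "(\<integral>z. w z * g z \<partial>N) = g x * (\<integral>z. w z \<partial>N)"
    and le: "\<And>z. w z \<noteq> 0 \<Longrightarrow> g z \<le> g x"
    and gc: "continuous_on L g"
    and y: "y \<in> L" "dist y x < r"
  shows "g y = g x"
proof (rule ccontr)
  assume "g y \<noteq> g x"
  then have lt: "g y < g x" using le[of y] w_pos[OF y] by force
  obtain d where d: "d > 0" "\<And>z. z \<in> L \<Longrightarrow> dist z y < d \<Longrightarrow> dist (g z) (g y) < g x - g y"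
    using gc y(1) lt unfolding continuous_on_iff by (meson diff_gt_0_iff_gt)
  define \<rho> where "\<rho> = min d (r - dist y x)"
  have "\<rho> > 0" using d y(2) by (simp add: \<rho>_def)
  then have "ball y \<rho> \<inter> U \<noteq> {}" using dense[OF y(1)] by (force simp: dist_commute)
  moreover have "AE z in N. w z * (g x - g z) = 0" using weighted_average_at_max[OF w avg le] .
  ultimately obtain z where z: "z \<in> ball y \<rho> \<inter> U" "w z * (g x - g z) = 0"
    using AE_witness_in_open[OF _ sN U(1) pos] by blast
  have zL: "z \<in> L" using z(1) U(2) by auto
  have "dist z x < r"
    using z(1) dist_triangle[of z x y] by (auto simp: \<rho>_def dist_commute)
  moreover have "g z < g x" using d(2)[OF zL] z(1) by (auto simp: \<rho>_def dist_commute dist_real_def)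
  ultimately show False using w_pos[OF zL] z(2) by simp
qed

lemma integral_weight_pos:
  fixes N :: "'a::metric_space measure" and w :: "'a \<Rightarrow> real"
  assumes sN: "sets N = sets borel" and U: "open U" "U \<subseteq> L"
    and pos: "\<And>V. open V \<Longrightarrow> V \<noteq> {} \<Longrightarrow> V \<subseteq> U \<Longrightarrow> emeasure N V > 0"
    and dense: "\<And>y e. y \<in> L \<Longrightarrow> e > 0 \<Longrightarrow> \<exists>z\<in>U. dist z y < e"
    and w: "integrable N w" "\<And>z. 0 \<le> w z"
    and w_pos: "\<And>z. z \<in> L \<Longrightarrow> dist z x < r \<Longrightarrow> w z > 0"
    and x: "x \<in> L" and r: "r > 0"
  shows "(\<integral>z. w z \<partial>N) > 0"
proof (rule ccontr)
  assume "\<not> ?thesis"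
  moreover have "0 \<le> (\<integral>z. w z \<partial>N)" by (rule Bochner_Integration.integral_nonneg) (simp add: w(2))
  ultimately have "(\<integral>z. w z \<partial>N) = 0" by simp
  then have "AE z in N. w z = 0" using integral_nonneg_eq_0_iff_AE[OF w(1)] w(2) by simp
  moreover have "ball x r \<inter> U \<noteq> {}" using dense[OF x r] by (force simp: dist_commute)
  ultimately obtain z where "z \<in> ball x r \<inter> U" "w z = 0"
    using AE_witness_in_open[OF _ sN U(1) pos] by blast
  then show False using w_pos[of z] U(2) by (auto simp: dist_commute)
qed

section \<open>The kernel\<close>

lemma norm_scaleR_inverse:
  fixes u :: "'a::real_normed_vector"
  assumes "h > 0"
  shows "norm ((1/h) *\<^sub>R u) = norm u / h"
  using assms by simp

lemma compact_support_bounded: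
  fixes k :: "'a::metric_space \<Rightarrow> real"
  assumes kc: "continuous_on UNIV k" and supp: "compact (closure {x. k x \<noteq> 0})"
  shows "\<exists>B\<ge>0. \<forall>x. \<bar>k x\<bar> \<le> B"
proof -
  let ?S = "closure {x. k x \<noteq> 0}"
  obtain B where B: "\<And>x. x \<in> ?S \<Longrightarrow> norm (k x) \<le> B"
    using compact_imp_bounded[OF compact_continuous_image[OF continuous_on_subset[OF kc] supp]]
    unfolding bounded_iff by blast
  have "\<bar>k x\<bar> \<le> max 0 B" for x
    using B[of x] closure_subset[of "{x. k x \<noteq> 0}"] by (cases "k x = 0") auto
  then show ?thesis by (intro exI[of _ "max 0 B"]) auto
qed

lemma k_h_zero_outside:
  fixes k :: "'a::real_normed_vector \<Rightarrow> real"
  assumes supp: "closure {x. k x \<noteq> 0} = cball 0 1" and h: "h > 0"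
    and nz: "k_h k h (z - x) \<noteq> 0"
  shows "dist z x \<le> h"
proof -
  have "(1/h) *\<^sub>R (z - x) \<in> cball 0 1"
    using nz closure_subset[of "{x. k x \<noteq> 0}"] unfolding supp k_h_def by auto
  then have "norm (z - x) / h \<le> 1" unfolding mem_cball_0 norm_scaleR_inverse[OF h] .
  then show ?thesis using h by (simp add: dist_norm field_simps)
qed

lemma k_h_lower_bound:
  fixes k :: "'a::real_normed_vector \<Rightarrow> real"
  assumes low: "\<forall>u\<in>cball 0 (1/2). c \<le> k u" and h: "h > 0" and z: "dist z x \<le> h/2"
  shows "c \<le> k_h k h (z - x)"
proof -
  have "norm ((1/h) *\<^sub>R (z - x)) \<le> 1/2"
    unfolding norm_scaleR_inverse[OF h] using h z by (simp add: dist_norm field_simps)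
  then show ?thesis using low by (simp add: k_h_def)
qed

lemma near_points_in_same_component:
  fixes L :: "'a::metric_space set"
  assumes sep: "\<And>C'. C' \<in> components L \<Longrightarrow> C' \<noteq> C \<Longrightarrow> h < setdist C C'"
    and x: "x \<in> C" and z: "z \<in> L" "dist z x \<le> h"
  shows "z \<in> C"
proof (rule ccontr)
  assume nz: "z \<notin> C"
  let ?C' = "connected_component_set L z"
  have C': "?C' \<in> components L" "z \<in> ?C'" using z(1) by (auto simp: componentsI)
  then have "h < setdist C ?C'" using nz sep by blast
  also have "\<dots> \<le> dist x z" using setdist_le_dist[OF x C'(2)] .
  finally show False using z(2) by (simp add: dist_commute)
qed

section \<open>Maximum principle for fixed points of Q_h\<close>

lemma K_h_Q_h_as_weighted_integrals:
  shows "K_h f t k h x = (\<integral>z. indicator (level_set f t) z * k_h k h (z - x) \<partial>mu_t f t)"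
    and "Q_h f t k h g x =
           (\<integral>z. indicator (level_set f t) z * k_h k h (z - x) * g z \<partial>mu_t f t) / K_h f t k h x"
  unfolding K_h_def Q_h_def q_h_def set_lebesgue_integral_def
  by (simp_all add: ac_simps)

lemma fixed_point_maximum_spreads:
  fixes f :: "'a::euclidean_space \<Rightarrow> real" and k g :: "'a \<Rightarrow> real" and t :: real
  defines "L \<equiv> level_set f t" and "N \<equiv> mu_t f t"
  assumes N: "prob_space N"
    and pos: "\<And>V. open V \<Longrightarrow> V \<noteq> {} \<Longrightarrow> V \<subseteq> {x. t < f x} \<Longrightarrow> emeasure N V > 0"
    and dense: "\<And>y e. y \<in> L \<Longrightarrow> e > 0 \<Longrightarrow> \<exists>z. dist z y < e \<and> t < f z"
    and fc: "continuous_on UNIV f"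
    and kc: "continuous_on UNIV k" and k_nonneg: "\<And>u. 0 \<le> k u" and Bk: "\<And>u. \<bar>k u\<bar> \<le> Bk"
    and k_supp: "closure {x. k x \<noteq> 0} = cball 0 1"
    and c: "c > 0" "\<forall>u\<in>cball 0 (1/2). c \<le> k u" and h: "h > 0"
    and gc: "continuous_on L g" and Bg: "\<And>y. y \<in> L \<Longrightarrow> \<bar>g y\<bar> \<le> Bg"
    and x: "x \<in> L" and fixed: "Q_h f t k h g x = g x"
    and max: "\<And>z. z \<in> L \<Longrightarrow> dist z x \<le> h \<Longrightarrow> g z \<le> g x"
    and y: "y \<in> L" "dist y x < h/2"
  shows "g y = g x"
proof -
  interpret N: prob_space N by (rule N)
  have sN: "sets N = sets borel" by (simp add: N_def sets_mu_t)
  have [measurable]: "f \<in> borel_measurable borel" "k \<in> borel_measurable borel"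
    using fc kc by (auto intro: borel_measurable_continuous_onI)
  have L_closed: "closed L" unfolding L_def level_set_def
    using fc by (simp add: closed_Collect_le continuous_on_const)
  have [measurable]: "L \<in> sets borel" using L_closed by auto
  let ?U = "{z. t < f z}"
  have U: "open ?U" "?U \<subseteq> L" using fc by (auto simp: open_Collect_less L_def level_set_def)
  have dense': "\<exists>z\<in>?U. dist z y < e" if "y \<in> L" "e > 0" for y e using dense[OF that] by auto
  define w where "w z = indicator L z * k_h k h (z - x)" for z
  define G where "G z = indicator L z * g z" for z
  have [measurable]: "w \<in> borel_measurable borel" by (simp add: w_def[abs_def] k_h_def)
  have [measurable]: "G \<in> borel_measurable borel"
    using borel_measurable_continuous_on_indicator[OF _ gc] by (simp add: G_def[abs_def])
  have meas_N: "measurable N borel = measurable borel borel" by (rule measurable_cong_sets[OF sN refl])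
  have Bk0: "0 \<le> Bk" using Bk[of 0] by simp
  have w_nonneg: "0 \<le> w z" for z by (simp add: w_def k_h_def k_nonneg)
  have wG: "w z * G z = w z * g z" for z by (simp add: w_def G_def indicator_def)
  have w_int: "integrable N w"
    by (rule N.integrable_const_bound[where B=Bk]) (auto simp: meas_N w_def k_h_def indicator_def Bk Bk0)
  have wG_bound: "\<bar>w z * G z\<bar> \<le> Bk * Bg" for z
    using Bk Bk0 Bg[of z] Bg[OF y(1)]
    by (cases "z \<in> L") (auto simp: w_def G_def k_h_def abs_mult intro!: mult_mono)
  have wg_int: "integrable N (\<lambda>z. w z * g z)"
    unfolding wG[symmetric]
    by (rule N.integrable_const_bound[where B="Bk * Bg"]) (auto simp: meas_N wG_bound)
  have w_pos: "w z > 0" if "z \<in> L" "dist z x < h/2" for z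
    using k_h_lower_bound[OF c(2) h, of z x] that c(1) by (simp add: w_def)
  have w_le: "g z \<le> g x" if "w z \<noteq> 0" for z
    using that max k_h_zero_outside[OF k_supp h] by (force simp: w_def indicator_def)
  have K: "K_h f t k h x = (\<integral>z. w z \<partial>N)"
    by (simp add: K_h_Q_h_as_weighted_integrals w_def L_def N_def)
  have "K_h f t k h x > 0"
    unfolding K using integral_weight_pos[where r="h/2", OF sN U pos dense' w_int w_nonneg w_pos x] h
    by simp
  moreover have "Q_h f t k h g x = (\<integral>z. w z * g z \<partial>N) / K_h f t k h x"
    by (simp add: K_h_Q_h_as_weighted_integrals w_def L_def N_def)
  ultimately have avg: "(\<integral>z. w z * g z \<partial>N) = g x * (\<integral>z. w z \<partial>N)"
    using fixed K by (simp add: field_simps)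
  show ?thesis
    using averaging_maximum_spreads[OF sN U pos dense' w_int wg_int w_nonneg w_pos avg w_le gc y] .
qed

section \<open>Constancy on components\<close>

text \<open>Clopen argument: if on a compact connected set every maximiser of g forces g to take
  the maximal value on a ball of fixed radius, then g is constant.\<close>
lemma constant_if_maximum_spreads:
  fixes C :: "'a::metric_space set" and g :: "'a \<Rightarrow> real"
  assumes C: "compact C" "connected C" and gc: "continuous_on C g" and r: "r > 0"
    and spread: "\<And>x y. x \<in> C \<Longrightarrow> (\<forall>z\<in>C. g z \<le> g x) \<Longrightarrow> y \<in> C \<Longrightarrow> dist y x < r \<Longrightarrow> g y = g x"
  shows "\<exists>c. \<forall>x\<in>C. g x = c"
proof (cases "C = {}")
  case False
  obtain x0 where x0: "x0 \<in> C" "\<forall>z\<in>C. g z \<le> g x0"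
    using continuous_attains_sup[OF C(1) False gc] by blast
  define S where "S = {x \<in> C. g x = g x0}"
  have "openin (top_of_set C) S"
    unfolding openin_euclidean_subtopology_iff
  proof (intro conjI ballI)
    fix x assume x: "x \<in> S"
    then have "\<forall>y\<in>C. dist y x < r \<longrightarrow> y \<in> S"
      using spread[of x] x0 by (auto simp: S_def)
    then show "\<exists>e>0. \<forall>y\<in>C. dist y x < e \<longrightarrow> y \<in> S" using r by blast
  qed (auto simp: S_def)
  moreover have "closedin (top_of_set C) S"
    unfolding S_def by (rule continuous_closedin_preimage_constant[OF gc])
  ultimately have "S = C"
    using connected_clopen C(2) x0(1) by (auto simp: S_def)
  then show ?thesis by (auto simp: S_def)
qed simp

theorem propositionC2:
  fixes f :: "'a::euclidean_space \<Rightarrow> real"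
    and Df :: "'a \<Rightarrow> 'a \<Rightarrow>\<^sub>L real"
    and D2f :: "'a \<Rightarrow> 'a \<Rightarrow>\<^sub>L 'a \<Rightarrow>\<^sub>L real"
    and k :: "'a \<Rightarrow> real"
    and t h :: real
    and g :: "'a \<Rightarrow> real"
  assumes f_nonneg: "\<And>x. f x \<ge> 0"
    and f_prob: "prob_space (law_of_density f)"
    and t_pos: "t > 0"
    and t_int: "t \<in> interior (range f)"
    and L_ne: "level_set f t \<noteq> {}"
    and L_compact: "compact (level_set f t)"
    and L_fin: "finite (components (level_set f t))"
    \<comment> \<open>Assumption 1\<close>
    and f_C2: "C2_with f Df D2f"
    and grad_nz: "\<And>x. f x = t \<Longrightarrow> Df x \<noteq> 0"
    and f_bdd: "bounded (range f)"
    and Df_bdd: "bounded (range Df)"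
    and D2f_bdd: "bounded (range D2f)"
    \<comment> \<open>Assumption 2\<close>
    and k_nonneg: "\<And>x. k x \<ge> 0"
    and k_C2: "C2 k"
    and k_supp: "closure {x. k x \<noteq> 0} = cball 0 1"
    and k_lower: "\<exists>c>0. \<forall>x\<in>cball 0 (1/2). k x \<ge> c"
    and k_sym: "\<And>x. k (- x) = k x"
    \<comment> \<open>0 < h < d_min\<close>
    and h_pos: "h > 0"
    and h_dmin: "\<And>C C'. C \<in> components (level_set f t) \<Longrightarrow> C' \<in> components (level_set f t)
                   \<Longrightarrow> C \<noteq> C' \<Longrightarrow> h < setdist C C'"
    \<comment> \<open>g continuous, bounded on L(t), with Q_h g = g\<close>
    and g_cont: "continuous_on (level_set f t) g"
    and g_bdd: "bounded (g ` level_set f t)"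
    and g_fix: "\<And>x. x \<in> level_set f t \<Longrightarrow> Q_h f t k h g x = g x"
  shows "\<forall>C \<in> components (level_set f t). \<exists>c. \<forall>x\<in>C. g x = c"
proof
  let ?L = "level_set f t"
  fix C assume C: "C \<in> components ?L"
  have fc: "continuous_on UNIV f" using f_C2 by (rule C2_with_continuous)
  have fder: "\<And>x. (f has_derivative blinfun_apply (Df x)) (at x)"
    using f_C2 by (simp add: C2_with_def)
  obtain x2 where "t < f x2" using interior_range_exceeded[OF t_int] by blast
  note N = mu_t_prob_space_and_open_pos[OF fc f_prob t_pos this]
  obtain Bk where Bk: "\<And>u. \<bar>k u\<bar> \<le> Bk"
    using compact_support_bounded[OF C2_continuous[OF k_C2]] k_supp by auto
  obtain c where c: "c > 0" "\<forall>u\<in>cball 0 (1/2). c \<le> k u" using k_lower by blast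
  obtain Bg where Bg: "\<And>y. y \<in> ?L \<Longrightarrow> \<bar>g y\<bar> \<le> Bg" using g_bdd by (auto simp: bounded_iff)
  have C_sub: "C \<subseteq> ?L" using C by (rule in_components_subset)
  have "compact C"
    using closed_components[OF compact_imp_closed[OF L_compact] C] L_compact C_sub
    by (metis compact_Int_closed inf.absorb_iff2)
  then show "\<exists>c. \<forall>x\<in>C. g x = c"
  proof (rule constant_if_maximum_spreads)
    show "connected C" using C by (rule in_components_connected)
    show "continuous_on C g" using g_cont C_sub by (rule continuous_on_subset)
    fix x y assume x: "x \<in> C" "\<forall>z\<in>C. g z \<le> g x" and y: "y \<in> C" "dist y x < h/2"
    have "\<And>z. z \<in> ?L \<Longrightarrow> dist z x \<le> h \<Longrightarrow> g z \<le> g x"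
      using x near_points_in_same_component[OF h_dmin[OF C] x(1)] by blast
    then show "g y = g x"
      using fixed_point_maximum_spreads[OF N superlevel_dense_in_level_set[OF fder grad_nz]
          fc C2_continuous[OF k_C2] k_nonneg Bk k_supp c h_pos g_cont Bg _ g_fix]
        x(1) y C_sub by blast
  qed (use h_pos in simp)
qed

end
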